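(* Let $T\in U(n,1)$ be unipotent (parabolic) and $S\in U(n,1)$ elliptic. Then $ST=TS$ if and only if $T(\mathrm{fix}(S))=\mathrm{fix}(S)$ and $S(\mathrm{fix}(T))=\mathrm{fix}(T)$.
   Context: $U(n,1)$ is the unitary group of a Hermitian form of signature $(n,1)$ on $\mathbb{C}^{n+1}$; it acts on complex hyperbolic space $H^n_{\mathbb{C}}$ (projectivized negative vectors) and its closure $\overline{H^n_{\mathbb{C}}}$ (adding projectivized null vectors). For $g\in U(n,1)$, $\mathrm{fix}(g)$ is the set of points of $\overline{H^n_{\mathbb{C}}}$ fixed by $g$. An element is elliptic if it fixes a point of $H^n_{\mathbb{C}}$. *)

theory Defs
  imports "Jordan_Normal_Form.Matrix"
begin

definition hform :: "nat \<Rightarrow> complex vec \<Rightarrow> complex vec \<Rightarrow> complex" where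
  "hform n z w = (\<Sum>i<n. z $ i * cnj (w $ i)) - z $ n * cnj (w $ n)"

definition Unk1 :: "nat \<Rightarrow> complex mat set" where
  "Unk1 n = {g \<in> carrier_mat (n+1) (n+1).
     \<forall>z \<in> carrier_vec (n+1). \<forall>w \<in> carrier_vec (n+1). hform n (g *\<^sub>v z) (g *\<^sub>v w) = hform n z w}"

text \<open>Projective point spanned by a nonzero vector (the complex line minus 0).\<close>
definition proj_pt :: "complex vec \<Rightarrow> complex vec set" where
  "proj_pt z = {c \<cdot>\<^sub>v z | c. c \<noteq> 0}"

definition chyp :: "nat \<Rightarrow> complex vec set set" where
  "chyp n = {proj_pt z | z. z \<in> carrier_vec (n+1) \<and> Re (hform n z z) < 0}"

definition chyp_bd :: "nat \<Rightarrow> complex vec set set" where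
  "chyp_bd n = {proj_pt z | z. z \<in> carrier_vec (n+1) \<and> z \<noteq> 0\<^sub>v (n+1) \<and> hform n z z = 0}"

definition chyp_cl :: "nat \<Rightarrow> complex vec set set" where
  "chyp_cl n = chyp n \<union> chyp_bd n"

definition pact :: "complex mat \<Rightarrow> complex vec set \<Rightarrow> complex vec set" where
  "pact g p = (\<lambda>z. g *\<^sub>v z) ` p"

definition fixset :: "nat \<Rightarrow> complex mat \<Rightarrow> complex vec set set" where
  "fixset n g = {p \<in> chyp_cl n. pact g p = p}"

definition elliptic :: "nat \<Rightarrow> complex mat \<Rightarrow> bool" where
  "elliptic n g \<longleftrightarrow> g \<in> Unk1 n \<and> (\<exists>p \<in> chyp n. pact g p = p)"

definition parabolic :: "nat \<Rightarrow> complex mat \<Rightarrow> bool" where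
  "parabolic n g \<longleftrightarrow> g \<in> Unk1 n \<and> (\<exists>p \<in> chyp_bd n. fixset n g = {p})"

definition unipotent :: "nat \<Rightarrow> complex mat \<Rightarrow> bool" where
  "unipotent n g \<longleftrightarrow> g \<in> carrier_mat (n+1) (n+1) \<and>
     (\<exists>k. (g - 1\<^sub>m (n+1)) ^\<^sub>m k = 0\<^sub>m (n+1) (n+1))"

end

theory Submission
  imports Defs "Jordan_Normal_Form.Determinant"
begin

text \<open>If \<open>S\<close> and \<open>T\<close> commute, each maps the fixed points of the other to fixed points, and so
  does its inverse. For the converse only \<open>T(fix(S)) \<subseteq> fix(S)\<close> and the unipotency of \<open>T\<close> are used
  (parabolicity is not). Let \<open>x\<close> be a negative eigenvector of \<open>S\<close>, with eigenvalue \<open>l\<close>, and \<open>E\<close>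
  the \<open>l\<close>-eigenspace of \<open>S\<close>. Since \<open>x\<^sup>\<bottom>\<close> is positive definite, \<open>T\<close> maps the negative vectors
  of \<open>E\<close>, which span \<open>E\<close>, into \<open>E\<close>; being unipotent, \<open>T\<close> then maps \<open>E\<close> onto itself, hence preserves
  the positive definite space \<open>E\<^sup>\<bottom>\<close>, on which a unipotent isometry is the identity. Now for every
  \<open>w\<close> the vector \<open>T w - w \<bottom> E\<^sup>\<bottom>\<close> lies in \<open>E\<close>, while \<open>S w - l w \<in> E\<^sup>\<bottom>\<close> is fixed by \<open>T\<close>; together
  these two facts say \<open>S T w = T S w\<close>.\<close>

section \<open>Matrices and invariant subspaces\<close>

lemma diff_eq_0_vec_iff:
  fixes u v :: "'a :: ab_group_add vec"
  assumes "u \<in> carrier_vec m" "v \<in> carrier_vec m"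
  shows "u - v = 0\<^sub>v m \<longleftrightarrow> u = v"
proof
  assume "u - v = 0\<^sub>v m"
  then have "(u - v) $ i = 0" if "i < m" for i using that by simp
  then show "u = v" using assms by (intro eq_vecI) auto
qed (use assms in simp)

lemma minus_one_mult_mat_vec:
  fixes T :: "'a :: ring_1 mat"
  assumes "T \<in> carrier_mat m m" "v \<in> carrier_vec m"
  shows "(T - 1\<^sub>m m) *\<^sub>v v = T *\<^sub>v v - v"
  using assms by (simp add: minus_mult_distrib_mat_vec)

lemma pow_mat_Suc_mult_vec:
  assumes "N \<in> carrier_mat m m" "v \<in> carrier_vec m"
  shows "(N ^\<^sub>m Suc j) *\<^sub>v v = (N ^\<^sub>m j) *\<^sub>v (N *\<^sub>v v)"
  using assoc_mult_mat_vec[OF pow_carrier_mat[OF assms(1)] assms] by simp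

lemma eq_mat_mult_vecI:
  fixes A B :: "'a :: semiring_1 mat"
  assumes A: "A \<in> carrier_mat m m" and B: "B \<in> carrier_mat m m"
    and eq: "\<And>v. v \<in> carrier_vec m \<Longrightarrow> A *\<^sub>v v = B *\<^sub>v v"
  shows "A = B"
proof (rule eq_matI)
  fix i j assume i: "i < dim_row B" and j: "j < dim_col B"
  have entry: "C $$ (i,j) = (C *\<^sub>v unit_vec m j) $ i" if C: "C \<in> carrier_mat m m" for C :: "'a mat"
  proof -
    have "C $$ (i,j) = col (C * 1\<^sub>m m) j $ i" using C i j B by simp
    also have "\<dots> = (C *\<^sub>v unit_vec m j) $ i" using C j B by (subst col_mult2) auto
    finally show ?thesis .
  qed
  show "A $$ (i,j) = B $$ (i,j)" using entry[OF A] entry[OF B] eq[of "unit_vec m j"] by simp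
qed (use A B in auto)

lemma commute_inverse:
  fixes A B H :: "'a :: semiring_1 mat"
  assumes A: "A \<in> carrier_mat m m" and B: "B \<in> carrier_mat m m" and H: "H \<in> carrier_mat m m"
    and AB: "A * B = B * A" and AH: "A * H = 1\<^sub>m m" and HA: "H * A = 1\<^sub>m m"
  shows "H * B = B * H"
proof -
  have "H * B = H * B * (A * H)" using AH right_mult_one_mat[OF mult_carrier_mat[OF H B]] by simp
  also have "\<dots> = H * (A * B) * H"
    using AB A B H by (simp add: assoc_mult_mat[of _ m m _ m _ m])
  also have "\<dots> = B * H"
    using HA A B H by (simp add: assoc_mult_mat[of _ m m _ m _ m, symmetric])
  finally show ?thesis .
qed

definition vec_subspace :: "nat \<Rightarrow> 'a :: comm_ring_1 vec set \<Rightarrow> bool" where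
  "vec_subspace m V \<longleftrightarrow> V \<subseteq> carrier_vec m \<and> (\<forall>u\<in>V. \<forall>w\<in>V. \<forall>a b. a \<cdot>\<^sub>v u + b \<cdot>\<^sub>v w \<in> V)"

definition eigenspace :: "nat \<Rightarrow> 'a :: comm_ring_1 mat \<Rightarrow> 'a \<Rightarrow> 'a vec set" where
  "eigenspace m g l = {v \<in> carrier_vec m. g *\<^sub>v v = l \<cdot>\<^sub>v v}"

lemma vec_subspace_carrier: "vec_subspace m V \<Longrightarrow> v \<in> V \<Longrightarrow> v \<in> carrier_vec m"
  unfolding vec_subspace_def by auto

lemma vec_subspace_diff:
  assumes V: "vec_subspace m V" and u: "u \<in> V" and w: "w \<in> V"
  shows "u - w \<in> V"
proof -
  have "u - w = 1 \<cdot>\<^sub>v u + (-1) \<cdot>\<^sub>v w"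
    using vec_subspace_carrier[OF V u] vec_subspace_carrier[OF V w] by (intro eq_vecI) auto
  then show ?thesis using V u w unfolding vec_subspace_def by metis
qed

lemma vec_subspace_eigenspace:
  fixes g :: "'a :: field mat"
  assumes g: "g \<in> carrier_mat m m"
  shows "vec_subspace m (eigenspace m g l)"
  unfolding vec_subspace_def eigenspace_def
proof safe
  fix u w :: "'a vec" and a b
  assume u: "u \<in> carrier_vec m" "g *\<^sub>v u = l \<cdot>\<^sub>v u" and w: "w \<in> carrier_vec m" "g *\<^sub>v w = l \<cdot>\<^sub>v w"
  have "g *\<^sub>v (a \<cdot>\<^sub>v u + b \<cdot>\<^sub>v w) = a \<cdot>\<^sub>v (g *\<^sub>v u) + b \<cdot>\<^sub>v (g *\<^sub>v w)"
    using mult_add_distrib_mat_vec[OF g, of "a \<cdot>\<^sub>v u" "b \<cdot>\<^sub>v w"] mult_mat_vec[OF g] u w by simp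
  also have "\<dots> = l \<cdot>\<^sub>v (a \<cdot>\<^sub>v u + b \<cdot>\<^sub>v w)"
    unfolding u(2) w(2) using u w by (intro eq_vecI) (auto simp: algebra_simps)
  finally show "g *\<^sub>v (a \<cdot>\<^sub>v u + b \<cdot>\<^sub>v w) = l \<cdot>\<^sub>v (a \<cdot>\<^sub>v u + b \<cdot>\<^sub>v w)" .
qed auto

lemma unipotent_maps_invariant_subspace_onto:
  fixes T :: "'a :: field mat"
  assumes T: "T \<in> carrier_mat m m" and nil: "(T - 1\<^sub>m m) ^\<^sub>m k = 0\<^sub>m m m"
    and E: "vec_subspace m E" and TE: "\<forall>v\<in>E. T *\<^sub>v v \<in> E" and e: "e \<in> E"
  shows "\<exists>e'\<in>E. T *\<^sub>v e' = e"
proof -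
  define N where "N = T - 1\<^sub>m m"
  have Nc: "N \<in> carrier_mat m m" using T unfolding N_def by (simp add: minus_carrier_mat)
  have "\<exists>e'\<in>E. T *\<^sub>v e' = e" if "(N ^\<^sub>m j) *\<^sub>v e = 0\<^sub>v m" "e \<in> E" for j e
    using that
  proof (induction j arbitrary: e)
    case 0
    then have "e = 0\<^sub>v m" using Nc vec_subspace_carrier[OF E] by auto
    moreover have "T *\<^sub>v 0\<^sub>v m = 0\<^sub>v m" using T by (intro eq_vecI) auto
    ultimately show ?case using \<open>e \<in> E\<close> by auto
  next
    case (Suc j)
    have ec: "e \<in> carrier_vec m" using vec_subspace_carrier[OF E Suc.prems(2)] .
    have Ne: "N *\<^sub>v e = T *\<^sub>v e - e" unfolding N_def using minus_one_mult_mat_vec[OF T ec] .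
    have "N *\<^sub>v e \<in> E" unfolding Ne using vec_subspace_diff[OF E] TE Suc.prems(2) by blast
    moreover have "(N ^\<^sub>m j) *\<^sub>v (N *\<^sub>v e) = 0\<^sub>v m" using Suc.prems(1) pow_mat_Suc_mult_vec[OF Nc ec] by simp
    ultimately obtain e2 where e2: "e2 \<in> E" "T *\<^sub>v e2 = N *\<^sub>v e" using Suc.IH by blast
    have "T *\<^sub>v (e - e2) = e"
      using e2 ec vec_subspace_carrier[OF E e2(1)] T unfolding Ne
      by (auto simp: mult_minus_distrib_mat_vec intro!: eq_vecI)
    then show ?case using vec_subspace_diff[OF E Suc.prems(2) e2(1)] by blast
  qed
  moreover have "(N ^\<^sub>m k) *\<^sub>v e = 0\<^sub>v m"
    using nil vec_subspace_carrier[OF E e] unfolding N_def by (auto intro!: eq_vecI)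
  ultimately show ?thesis using e by blast
qed

section \<open>The Hermitian form\<close>

lemma hform_add_left:
  assumes "z \<in> carrier_vec (n+1)" "w \<in> carrier_vec (n+1)"
  shows "hform n (z + w) u = hform n z u + hform n w u"
proof -
  have "(\<Sum>i<n. (z+w) $ i * cnj (u $ i)) = (\<Sum>i<n. z $ i * cnj (u $ i)) + (\<Sum>i<n. w $ i * cnj (u $ i))"
    unfolding sum.distrib[symmetric] by (rule sum.cong) (use assms in \<open>auto simp: algebra_simps\<close>)
  then show ?thesis using assms unfolding hform_def by (simp add: algebra_simps)
qed

lemma hform_smult_left:
  assumes "z \<in> carrier_vec (n+1)"
  shows "hform n (c \<cdot>\<^sub>v z) u = c * hform n z u"
proof -
  have "(\<Sum>i<n. (c \<cdot>\<^sub>v z) $ i * cnj (u $ i)) = c * (\<Sum>i<n. z $ i * cnj (u $ i))"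
    unfolding sum_distrib_left by (rule sum.cong) (use assms in \<open>auto simp: algebra_simps\<close>)
  then show ?thesis using assms unfolding hform_def by (simp add: algebra_simps)
qed

lemma hform_swap: "hform n w z = cnj (hform n z w)"
  unfolding hform_def by (simp add: algebra_simps)

lemma hform_add_right:
  assumes "z \<in> carrier_vec (n+1)" "w \<in> carrier_vec (n+1)"
  shows "hform n u (z + w) = hform n u z + hform n u w"
  by (metis hform_swap hform_add_left[OF assms] complex_cnj_add)

lemma hform_smult_right:
  assumes "z \<in> carrier_vec (n+1)"
  shows "hform n u (c \<cdot>\<^sub>v z) = cnj c * hform n u z"
  by (metis hform_swap hform_smult_left[OF assms] complex_cnj_mult)

lemma hform_diff_left:
  assumes "z \<in> carrier_vec (n+1)" "w \<in> carrier_vec (n+1)"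
  shows "hform n (z - w) u = hform n z u - hform n w u"
proof -
  have "z - w = z + (-1) \<cdot>\<^sub>v w" using assms by (intro eq_vecI) auto
  then show ?thesis using assms hform_add_left[of z n "(-1) \<cdot>\<^sub>v w"] hform_smult_left[of w n "-1"] by simp
qed

lemma hform_diff_right:
  assumes "z \<in> carrier_vec (n+1)" "w \<in> carrier_vec (n+1)"
  shows "hform n u (z - w) = hform n u z - hform n u w"
  by (metis hform_swap hform_diff_left[OF assms] complex_cnj_diff)

lemma hform_zero_left: "hform n (0\<^sub>v (n+1)) u = 0"
  unfolding hform_def by simp

lemma hform_self: "hform n v v = of_real ((\<Sum>i<n. (cmod (v$i))\<^sup>2) - (cmod (v$n))\<^sup>2)"
  unfolding hform_def by (simp add: complex_mult_cnj cmod_power2)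

lemma hform_unit_vec_right:
  assumes "z \<in> carrier_vec (n+1)" "i \<le> n"
  shows "hform n z (unit_vec (n+1) i) = (if i < n then z$i else - z$n)"
proof -
  have "(\<Sum>k<n. z $ k * cnj (unit_vec (n+1) i $ k)) = (\<Sum>k<n. if k = i then z$i else 0)"
    by (rule sum.cong) (use assms in auto)
  then show ?thesis using assms unfolding hform_def by auto
qed

text \<open>The orthogonal complement of a negative vector is positive definite: this is the reverse
  Cauchy--Schwarz inequality, obtained by expanding \<open>\<Sum>i<n. \<bar>x\<^sub>n v\<^sub>i - v\<^sub>n x\<^sub>i\<bar>\<^sup>2 \<ge> 0\<close>.\<close>
lemma orth_negative_nonpos_imp_zero:
  assumes x: "x \<in> carrier_vec (n+1)" and v: "v \<in> carrier_vec (n+1)"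
    and x_neg: "Re (hform n x x) < 0" and orth: "hform n v x = 0" and v_nonpos: "Re (hform n v v) \<le> 0"
  shows "v = 0\<^sub>v (n+1)"
proof -
  define a where "a = (\<Sum>i<n. (cmod (x$i))\<^sup>2)"
  define b where "b = (\<Sum>i<n. (cmod (v$i))\<^sup>2)"
  define X where "X = x$n"
  define V where "V = v$n"
  have ha: "a < (cmod X)\<^sup>2" using x_neg unfolding hform_self a_def X_def by simp
  have hb: "b \<le> (cmod V)\<^sup>2" using v_nonpos unfolding hform_self b_def V_def by simp
  have orth_sum: "(\<Sum>i<n. v$i * cnj (x$i)) = V * cnj X" using orth unfolding hform_def V_def X_def by simp
  have V0: "V = 0"
  proof (rule ccontr)
    assume "V \<noteq> 0"
    hence V_pos: "(cmod V)\<^sup>2 > 0" by simp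
    have expand: "(cmod (X * v - V * x))\<^sup>2
        = (cmod X)\<^sup>2 * (cmod v)\<^sup>2 - 2 * Re (X * cnj V * (v * cnj x)) + (cmod V)\<^sup>2 * (cmod x)\<^sup>2" for v x
      by (simp only: cmod_power2) (simp add: power2_eq_square algebra_simps)
    have "0 \<le> (\<Sum>i<n. (cmod (X * v$i - V * x$i))\<^sup>2)" by (intro sum_nonneg) auto
    also have "\<dots> = (cmod X)\<^sup>2 * b - 2 * Re (X * cnj V * (\<Sum>i<n. v$i * cnj (x$i))) + (cmod V)\<^sup>2 * a"
      unfolding expand a_def b_def
      by (simp add: sum.distrib sum_subtractf sum_distrib_left Re_sum[symmetric] algebra_simps)
    also have "X * cnj V * (\<Sum>i<n. v$i * cnj (x$i)) = of_real ((cmod X)\<^sup>2 * (cmod V)\<^sup>2)"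
    proof -
      have "X * cnj V * (V * cnj X) = (X * cnj X) * (V * cnj V)" by (simp add: algebra_simps)
      then show ?thesis unfolding orth_sum complex_mult_cnj cmod_power2 by simp
    qed
    finally have "0 \<le> (cmod X)\<^sup>2 * b - 2 * ((cmod X)\<^sup>2 * (cmod V)\<^sup>2) + (cmod V)\<^sup>2 * a" by simp
    moreover have "(cmod X)\<^sup>2 * b \<le> (cmod X)\<^sup>2 * (cmod V)\<^sup>2" using hb by (simp add: mult_left_mono)
    moreover have "(cmod V)\<^sup>2 * a < (cmod V)\<^sup>2 * (cmod X)\<^sup>2" using ha V_pos by simp
    ultimately show False by (simp add: algebra_simps)
  qed
  have "b \<le> 0" using hb V0 by simp
  hence "\<forall>i\<in>{..<n}. (cmod (v$i))\<^sup>2 = 0"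
    by (subst sum_nonneg_eq_0_iff[symmetric]) (auto intro!: antisym sum_nonneg simp: b_def)
  then show ?thesis using v V0 unfolding V_def by (intro eq_vecI) (auto simp: less_Suc_eq)
qed

definition horth :: "nat \<Rightarrow> complex vec set \<Rightarrow> complex vec set" where
  "horth n E = {w \<in> carrier_vec (n+1). \<forall>e\<in>E. hform n w e = 0}"

lemma vec_subspace_horth: "vec_subspace (n+1) (horth n E)"
  unfolding vec_subspace_def horth_def by (auto simp: hform_add_left hform_smult_left)

section \<open>The group \<open>U(n,1)\<close> and its projective action\<close>

lemma Unk1_carrier: "g \<in> Unk1 n \<Longrightarrow> g \<in> carrier_mat (n+1) (n+1)"
  unfolding Unk1_def by auto

lemma Unk1_hform:
  "g \<in> Unk1 n \<Longrightarrow> z \<in> carrier_vec (n+1) \<Longrightarrow> w \<in> carrier_vec (n+1) \<Longrightarrow>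
   hform n (g *\<^sub>v z) (g *\<^sub>v w) = hform n z w"
  unfolding Unk1_def by auto

lemma Unk1_mult_vec_eq_0:
  assumes g: "g \<in> Unk1 n" and z: "z \<in> carrier_vec (n+1)" and gz: "g *\<^sub>v z = 0\<^sub>v (n+1)"
  shows "z = 0\<^sub>v (n+1)"
proof (rule eq_vecI)
  fix i assume "i < dim_vec (0\<^sub>v (n+1) :: complex vec)"
  hence i: "i \<le> n" by simp
  have "hform n z (unit_vec (n+1) i) = hform n (g *\<^sub>v z) (g *\<^sub>v unit_vec (n+1) i)"
    using Unk1_hform[OF g z, of "unit_vec (n+1) i"] by simp
  also have "\<dots> = 0" unfolding gz hform_zero_left ..
  finally show "z $ i = 0\<^sub>v (n+1) $ i" using hform_unit_vec_right[OF z i] i by (auto split: if_splits)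
qed (use z in auto)

lemma Unk1_inverse:
  assumes g: "g \<in> Unk1 n"
  obtains h where "h \<in> Unk1 n" "g * h = 1\<^sub>m (n+1)" "h * g = 1\<^sub>m (n+1)"
proof -
  have gc: "g \<in> carrier_mat (n+1) (n+1)" using Unk1_carrier[OF g] .
  have "det g \<noteq> 0"
    using Unk1_mult_vec_eq_0[OF g] by (subst det_0_iff_vec_prod_zero[OF gc]) auto
  from det_non_zero_imp_unit[OF gc this, of undefined]
  obtain h where hc: "h \<in> carrier_mat (n+1) (n+1)" and inv: "h * g = 1\<^sub>m (n+1)" "g * h = 1\<^sub>m (n+1)"
    unfolding Units_def ring_mat_def by auto
  have "h \<in> Unk1 n" unfolding Unk1_def
  proof (safe intro!: hc)
    fix z w :: "complex vec" assume z: "z \<in> carrier_vec (n+1)" and w: "w \<in> carrier_vec (n+1)"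
    have "hform n (h *\<^sub>v z) (h *\<^sub>v w) = hform n (g *\<^sub>v (h *\<^sub>v z)) (g *\<^sub>v (h *\<^sub>v w))"
      using Unk1_hform[OF g, of "h *\<^sub>v z" "h *\<^sub>v w"] hc z w by simp
    also have "g *\<^sub>v (h *\<^sub>v z) = z" using assoc_mult_mat_vec[OF gc hc z, symmetric] inv z by simp
    also have "g *\<^sub>v (h *\<^sub>v w) = w" using assoc_mult_mat_vec[OF gc hc w, symmetric] inv w by simp
    finally show "hform n (h *\<^sub>v z) (h *\<^sub>v w) = hform n z w" .
  qed
  then show thesis using that inv by blast
qed

lemma Unk1_eigenvalue_unimodular:
  assumes g: "g \<in> Unk1 n" and y: "y \<in> carrier_vec (n+1)" and gy: "g *\<^sub>v y = \<mu> \<cdot>\<^sub>v y"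
    and y_neg: "Re (hform n y y) < 0"
  shows "\<mu> * cnj \<mu> = 1"
proof -
  have "hform n y y = hform n (g *\<^sub>v y) (g *\<^sub>v y)" using Unk1_hform[OF g y y] by simp
  also have "\<dots> = \<mu> * cnj \<mu> * hform n y y" unfolding gy using y by (simp add: hform_smult_left hform_smult_right)
  finally show ?thesis using y_neg by auto
qed

lemma Unk1_eigenspaces_orth:
  assumes g: "g \<in> Unk1 n" and u: "u \<in> eigenspace (n+1) g \<mu>" and w: "w \<in> eigenspace (n+1) g l"
    and l_unit: "l * cnj l = 1" and ne: "\<mu> \<noteq> l"
  shows "hform n u w = 0"
proof -
  have uc: "u \<in> carrier_vec (n+1)" and wc: "w \<in> carrier_vec (n+1)"
    using u w unfolding eigenspace_def by auto
  have "hform n u w = hform n (g *\<^sub>v u) (g *\<^sub>v w)" using Unk1_hform[OF g uc wc] by simp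
  also have "\<dots> = \<mu> * cnj l * hform n u w"
    using u w uc wc unfolding eigenspace_def by (simp add: hform_smult_left hform_smult_right)
  finally have "(1 - \<mu> * cnj l) * hform n u w = 0" by (simp add: algebra_simps)
  moreover have "\<mu> * cnj l \<noteq> 1"
  proof
    assume "\<mu> * cnj l = 1"
    then have "\<mu> * (l * cnj l) = l" by (simp add: algebra_simps)
    with l_unit ne show False by simp
  qed
  ultimately show ?thesis by simp
qed

lemma Unk1_horth_invariant:
  assumes g: "g \<in> Unk1 n" and E: "E \<subseteq> carrier_vec (n+1)" and onto: "\<forall>e\<in>E. \<exists>e'\<in>E. g *\<^sub>v e' = e"
    and w: "w \<in> horth n E"
  shows "g *\<^sub>v w \<in> horth n E"
proof -
  have wc: "w \<in> carrier_vec (n+1)" using w unfolding horth_def by auto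
  have "hform n (g *\<^sub>v w) e = 0" if "e \<in> E" for e
  proof -
    obtain e' where e': "e' \<in> E" "g *\<^sub>v e' = e" using onto \<open>e \<in> E\<close> by blast
    then have "hform n (g *\<^sub>v w) e = hform n w e'" using Unk1_hform[OF g wc] E by auto
    then show ?thesis using w e'(1) unfolding horth_def by auto
  qed
  then show ?thesis unfolding horth_def using Unk1_carrier[OF g] wc by simp
qed

text \<open>If \<open>T w = w + u\<close> with \<open>T u = u\<close>, then \<open>\<langle>w,u\<rangle> = \<langle>Tw,Tu\<rangle> = \<langle>w,u\<rangle> + \<langle>u,u\<rangle>\<close>, so \<open>u\<close> is null;
  descending along the powers of \<open>T - 1\<close> this kills \<open>T - 1\<close> on a definite subspace.\<close>
lemma Unk1_unipotent_fixes_definite_subspace: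
  assumes T: "T \<in> Unk1 n" and nil: "(T - 1\<^sub>m (n+1)) ^\<^sub>m k = 0\<^sub>m (n+1) (n+1)"
    and V: "vec_subspace (n+1) V" and TV: "\<forall>v\<in>V. T *\<^sub>v v \<in> V"
    and definite: "\<forall>v\<in>V. hform n v v = 0 \<longrightarrow> v = 0\<^sub>v (n+1)" and v: "v \<in> V"
  shows "T *\<^sub>v v = v"
proof -
  define N where "N = T - 1\<^sub>m (n+1)"
  have Tc: "T \<in> carrier_mat (n+1) (n+1)" using Unk1_carrier[OF T] .
  have Nc: "N \<in> carrier_mat (n+1) (n+1)" using Tc unfolding N_def by (simp add: minus_carrier_mat)
  have Nw: "N *\<^sub>v w = T *\<^sub>v w - w" if "w \<in> V" for w
    unfolding N_def using minus_one_mult_mat_vec[OF Tc vec_subspace_carrier[OF V that]] .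
  have "N *\<^sub>v w = 0\<^sub>v (n+1)" if "(N ^\<^sub>m j) *\<^sub>v w = 0\<^sub>v (n+1)" "w \<in> V" for j w
    using that
  proof (induction j arbitrary: w)
    case 0
    then show ?case using Nc vec_subspace_carrier[OF V] by (auto intro!: eq_vecI)
  next
    case (Suc j)
    define u where "u = N *\<^sub>v w"
    have wc: "w \<in> carrier_vec (n+1)" using vec_subspace_carrier[OF V Suc.prems(2)] .
    have uV: "u \<in> V" unfolding u_def Nw[OF Suc.prems(2)] using vec_subspace_diff[OF V] TV Suc.prems(2) by blast
    have uc: "u \<in> carrier_vec (n+1)" using vec_subspace_carrier[OF V uV] .
    have "N *\<^sub>v u = 0\<^sub>v (n+1)"
      using Suc.IH[OF _ uV] Suc.prems(1) pow_mat_Suc_mult_vec[OF Nc wc] unfolding u_def by simp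
    then have Tu: "T *\<^sub>v u = u" using Nw[OF uV] diff_eq_0_vec_iff[of "T *\<^sub>v u" "n+1" u] Tc uc by simp
    have Tw: "T *\<^sub>v w = w + u" using Nw[OF Suc.prems(2)] Tc wc unfolding u_def by (auto intro!: eq_vecI)
    have "hform n w u = hform n (T *\<^sub>v w) (T *\<^sub>v u)" using Unk1_hform[OF T wc uc] by simp
    also have "\<dots> = hform n w u + hform n u u" unfolding Tw Tu using hform_add_left[OF wc uc] by simp
    finally show ?case using definite uV unfolding u_def by simp
  qed
  moreover have "(N ^\<^sub>m k) *\<^sub>v v = 0\<^sub>v (n+1)"
    using nil vec_subspace_carrier[OF V v] unfolding N_def by (auto intro!: eq_vecI)
  ultimately have "T *\<^sub>v v - v = 0\<^sub>v (n+1)" using Nw[OF v] v by simp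
  then show ?thesis using diff_eq_0_vec_iff[of "T *\<^sub>v v" "n+1" v] Tc vec_subspace_carrier[OF V v] by simp
qed

lemma proj_pt_self: "z \<in> proj_pt z"
  unfolding proj_pt_def by (auto intro!: exI[of _ 1])

lemma proj_pt_smult: assumes "(c::complex) \<noteq> 0" shows "proj_pt (c \<cdot>\<^sub>v z) = proj_pt z"
proof -
  have "proj_pt (c \<cdot>\<^sub>v z) \<subseteq> proj_pt z" unfolding proj_pt_def using assms
    by (auto simp: smult_smult_assoc)
  moreover have "proj_pt z \<subseteq> proj_pt (c \<cdot>\<^sub>v z)" unfolding proj_pt_def
  proof safe
    fix d :: complex assume "d \<noteq> 0"
    then show "\<exists>e. d \<cdot>\<^sub>v z = e \<cdot>\<^sub>v (c \<cdot>\<^sub>v z) \<and> e \<noteq> 0" using assms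
      by (intro exI[of _ "d / c"]) (auto simp: smult_smult_assoc)
  qed
  ultimately show ?thesis by blast
qed

lemma pact_proj_pt:
  assumes "g \<in> carrier_mat (n+1) (n+1)" "z \<in> carrier_vec (n+1)"
  shows "pact g (proj_pt z) = proj_pt (g *\<^sub>v z)"
proof -
  have "pact g (proj_pt z) = {g *\<^sub>v (c \<cdot>\<^sub>v z) | c. c \<noteq> 0}" unfolding pact_def proj_pt_def by auto
  also have "\<dots> = proj_pt (g *\<^sub>v z)" unfolding proj_pt_def using mult_mat_vec[OF assms] by auto
  finally show ?thesis .
qed

lemma pact_proj_pt_eq_iff:
  assumes "g \<in> carrier_mat (n+1) (n+1)" "y \<in> carrier_vec (n+1)"
  shows "pact g (proj_pt y) = proj_pt y \<longleftrightarrow> (\<exists>\<mu>. \<mu> \<noteq> 0 \<and> g *\<^sub>v y = \<mu> \<cdot>\<^sub>v y)"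
proof
  assume "pact g (proj_pt y) = proj_pt y"
  then have "g *\<^sub>v y \<in> proj_pt y" using pact_proj_pt[OF assms] proj_pt_self[of "g *\<^sub>v y"] by simp
  then show "\<exists>\<mu>. \<mu> \<noteq> 0 \<and> g *\<^sub>v y = \<mu> \<cdot>\<^sub>v y" unfolding proj_pt_def by auto
qed (use pact_proj_pt[OF assms] proj_pt_smult in auto)

lemma chyp_cl_cases:
  assumes "p \<in> chyp_cl n"
  obtains z where "p = proj_pt z" "z \<in> carrier_vec (n+1)"
    "Re (hform n z z) < 0 \<or> (z \<noteq> 0\<^sub>v (n+1) \<and> hform n z z = 0)"
  using assms unfolding chyp_cl_def chyp_def chyp_bd_def by auto

lemma pact_chyp_cl:
  assumes g: "g \<in> Unk1 n" and p: "p \<in> chyp_cl n"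
  shows "pact g p \<in> chyp_cl n"
proof -
  obtain z where z: "p = proj_pt z" "z \<in> carrier_vec (n+1)"
    and type: "Re (hform n z z) < 0 \<or> (z \<noteq> 0\<^sub>v (n+1) \<and> hform n z z = 0)"
    using chyp_cl_cases[OF p] by blast
  have gc: "g \<in> carrier_mat (n+1) (n+1)" using Unk1_carrier[OF g] .
  have "pact g p = proj_pt (g *\<^sub>v z)" using pact_proj_pt[OF gc z(2)] z by simp
  moreover have "hform n (g *\<^sub>v z) (g *\<^sub>v z) = hform n z z" using Unk1_hform[OF g z(2) z(2)] .
  moreover have "z \<noteq> 0\<^sub>v (n+1) \<Longrightarrow> g *\<^sub>v z \<noteq> 0\<^sub>v (n+1)" using Unk1_mult_vec_eq_0[OF g z(2)] by blast
  moreover have "g *\<^sub>v z \<in> carrier_vec (n+1)" using gc z by simp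
  ultimately show ?thesis using type unfolding chyp_cl_def chyp_def chyp_bd_def by auto
qed

section \<open>Commuting elements permute each other's fixed points\<close>

lemma pact_fixset_of_commute:
  assumes A: "A \<in> Unk1 n" and B: "B \<in> carrier_mat (n+1) (n+1)" and AB: "A * B = B * A"
    and p: "p \<in> fixset n B"
  shows "pact A p \<in> fixset n B"
proof -
  have p_cl: "p \<in> chyp_cl n" and p_fix: "pact B p = p" using p unfolding fixset_def by auto
  obtain z where z: "p = proj_pt z" "z \<in> carrier_vec (n+1)" using chyp_cl_cases[OF p_cl] by blast
  have Ac: "A \<in> carrier_mat (n+1) (n+1)" using Unk1_carrier[OF A] .
  have "pact B (pact A p) = proj_pt (B *\<^sub>v (A *\<^sub>v z))" using z Ac B by (simp add: pact_proj_pt)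
  also have "B *\<^sub>v (A *\<^sub>v z) = A *\<^sub>v (B *\<^sub>v z)"
    using assoc_mult_mat_vec[OF B Ac z(2)] assoc_mult_mat_vec[OF Ac B z(2)] AB by simp
  also have "proj_pt \<dots> = pact A (pact B p)" using z Ac B by (simp add: pact_proj_pt)
  finally have "pact B (pact A p) = pact A p" using p_fix by simp
  then show ?thesis using pact_chyp_cl[OF A p_cl] unfolding fixset_def by auto
qed

lemma pact_fixset_eq_of_commute:
  assumes A: "A \<in> Unk1 n" and B: "B \<in> carrier_mat (n+1) (n+1)" and AB: "A * B = B * A"
  shows "pact A ` fixset n B = fixset n B"
proof
  show "pact A ` fixset n B \<subseteq> fixset n B" using pact_fixset_of_commute[OF A B AB] by blast
  obtain H where H: "H \<in> Unk1 n" "A * H = 1\<^sub>m (n+1)" "H * A = 1\<^sub>m (n+1)" using Unk1_inverse[OF A] by blast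
  have Ac: "A \<in> carrier_mat (n+1) (n+1)" and Hc: "H \<in> carrier_mat (n+1) (n+1)"
    using Unk1_carrier A H(1) by auto
  have HB: "H * B = B * H" using commute_inverse[OF Ac B Hc AB H(2,3)] .
  show "fixset n B \<subseteq> pact A ` fixset n B"
  proof
    fix p assume p: "p \<in> fixset n B"
    obtain z where z: "p = proj_pt z" "z \<in> carrier_vec (n+1)"
      using p chyp_cl_cases unfolding fixset_def by blast
    have "pact A (pact H p) = proj_pt (A *\<^sub>v (H *\<^sub>v z))" using z Ac Hc by (simp add: pact_proj_pt)
    also have "A *\<^sub>v (H *\<^sub>v z) = z" using assoc_mult_mat_vec[OF Ac Hc z(2), symmetric] H z by simp
    finally show "p \<in> pact A ` fixset n B"
      using pact_fixset_of_commute[OF H(1) B HB p] z by force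
  qed
qed

section \<open>Isometries preserving the fixed points of an elliptic element\<close>

text \<open>If \<open>T\<close> preserves \<open>fix(S)\<close>, a negative \<open>l\<close>-eigenvector \<open>v\<close> of \<open>S\<close> is sent to a negative
  eigenvector of some eigenvalue \<open>\<mu>\<close>; for \<open>\<mu> \<noteq> l\<close> it would be orthogonal to the negative vector \<open>x\<close>.\<close>
lemma pact_fixset_invariant_negative_eigenvector:
  assumes T: "T \<in> Unk1 n" and S: "S \<in> Unk1 n"
    and x: "x \<in> eigenspace (n+1) S l" "Re (hform n x x) < 0"
    and inv: "pact T ` fixset n S \<subseteq> fixset n S"
    and v: "v \<in> eigenspace (n+1) S l" "Re (hform n v v) < 0"
  shows "T *\<^sub>v v \<in> eigenspace (n+1) S l"
proof -
  have Tc: "T \<in> carrier_mat (n+1) (n+1)" and Sc: "S \<in> carrier_mat (n+1) (n+1)"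
    using Unk1_carrier T S by auto
  have xc: "x \<in> carrier_vec (n+1)" and vc: "v \<in> carrier_vec (n+1)"
    and Sx: "S *\<^sub>v x = l \<cdot>\<^sub>v x" and Sv: "S *\<^sub>v v = l \<cdot>\<^sub>v v"
    using x v unfolding eigenspace_def by auto
  have l_unit: "l * cnj l = 1" using Unk1_eigenvalue_unimodular[OF S xc Sx x(2)] .
  have Tvc: "T *\<^sub>v v \<in> carrier_vec (n+1)" using Tc vc by simp
  have Tv_neg: "Re (hform n (T *\<^sub>v v) (T *\<^sub>v v)) < 0" using Unk1_hform[OF T vc vc] v(2) by simp
  have "proj_pt v \<in> fixset n S"
    unfolding fixset_def chyp_cl_def chyp_def using vc v(2) Sv l_unit pact_proj_pt_eq_iff[OF Sc vc]
    by (auto intro!: exI[of _ l])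
  then have "pact T (proj_pt v) \<in> fixset n S" using inv by blast
  then have "pact S (proj_pt (T *\<^sub>v v)) = proj_pt (T *\<^sub>v v)"
    unfolding fixset_def pact_proj_pt[OF Tc vc] by simp
  then obtain \<mu> where Tv: "T *\<^sub>v v \<in> eigenspace (n+1) S \<mu>"
    using pact_proj_pt_eq_iff[OF Sc Tvc] Tvc unfolding eigenspace_def by auto
  have "\<mu> = l"
  proof (rule ccontr)
    assume "\<mu> \<noteq> l"
    then have "hform n (T *\<^sub>v v) x = 0" using Unk1_eigenspaces_orth[OF S Tv x(1) l_unit] by simp
    then have "T *\<^sub>v v = 0\<^sub>v (n+1)" using orth_negative_nonpos_imp_zero[OF xc Tvc x(2)] Tv_neg by simp
    then show False using Tv_neg hform_zero_left[of n "0\<^sub>v (n+1)"] by simp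
  qed
  then show ?thesis using Tv by simp
qed

lemma exists_quadratic_neg:
  fixes a b c :: real
  assumes "c < 0"
  shows "\<exists>t. a + 2 * t * b + t\<^sup>2 * c < 0"
proof -
  define t where "t = (\<bar>a\<bar> + 2 * \<bar>b\<bar> + 1) / (- c) + 1"
  have "(\<bar>a\<bar> + 2 * \<bar>b\<bar> + 1) / (- c) \<ge> 0" using assms by (intro divide_nonneg_pos) auto
  hence t1: "t \<ge> 1" unfolding t_def by simp
  have tc: "t * (- c) \<ge> \<bar>a\<bar> + 2 * \<bar>b\<bar> + 1" unfolding t_def using assms by (simp add: field_simps)
  have "t\<^sup>2 * c = - (t * (t * (-c)))" by (simp add: power2_eq_square)
  also have "\<dots> \<le> - (t * (\<bar>a\<bar> + 2 * \<bar>b\<bar> + 1))" using mult_left_mono[OF tc, of t] t1 by simp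
  finally have "t\<^sup>2 * c \<le> - (t * (\<bar>a\<bar> + 2 * \<bar>b\<bar> + 1))" .
  moreover have "a \<le> t * \<bar>a\<bar>" using mult_right_mono[OF t1, of "\<bar>a\<bar>"] by simp
  moreover have "t * b \<le> t * \<bar>b\<bar>" using t1 by (intro mult_left_mono) auto
  moreover have "t * (\<bar>a\<bar> + 2 * \<bar>b\<bar> + 1) = t * \<bar>a\<bar> + 2 * (t * \<bar>b\<bar>) + t" by (simp add: algebra_simps)
  ultimately have "a + 2 * (t * b) + t\<^sup>2 * c < 0" using t1 by linarith
  then show ?thesis by (intro exI[of _ t]) (simp add: algebra_simps)
qed

text \<open>Every \<open>v\<close> in the eigenspace is the difference of the negative vectors \<open>v + t x\<close> and \<open>t x\<close>
  for large real \<open>t\<close>.\<close>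
lemma pact_fixset_invariant_eigenspace:
  assumes T: "T \<in> Unk1 n" and S: "S \<in> Unk1 n"
    and x: "x \<in> eigenspace (n+1) S l" "Re (hform n x x) < 0"
    and inv: "pact T ` fixset n S \<subseteq> fixset n S"
    and v: "v \<in> eigenspace (n+1) S l"
  shows "T *\<^sub>v v \<in> eigenspace (n+1) S l"
proof -
  let ?E = "eigenspace (n+1) S l"
  have Tc: "T \<in> carrier_mat (n+1) (n+1)" using Unk1_carrier[OF T] .
  have E: "vec_subspace (n+1) ?E" using vec_subspace_eigenspace[OF Unk1_carrier[OF S]] .
  have xc: "x \<in> carrier_vec (n+1)" and vc: "v \<in> carrier_vec (n+1)"
    using x v unfolding eigenspace_def by auto
  obtain t where t: "Re (hform n v v) + 2 * t * Re (hform n v x) + t\<^sup>2 * Re (hform n x x) < 0"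
    using exists_quadratic_neg[OF x(2)] by blast
  define w where "w = 1 \<cdot>\<^sub>v v + of_real t \<cdot>\<^sub>v x"
  have wE: "w \<in> ?E" using E v x(1) unfolding w_def vec_subspace_def by blast
  have "hform n w w = hform n v v + of_real t * (hform n x v + hform n v x) + of_real t * of_real t * hform n x x"
    unfolding w_def using vc xc
    by (simp add: hform_add_left hform_add_right hform_smult_left hform_smult_right algebra_simps)
  moreover have "Re (hform n x v) = Re (hform n v x)" using hform_swap[of n x v] by simp
  ultimately have "Re (hform n w w) < 0" using t by (simp add: power2_eq_square algebra_simps)
  then have Tw: "T *\<^sub>v w \<in> ?E" using pact_fixset_invariant_negative_eigenvector[OF T S x inv wE] by simp
  have Tx: "T *\<^sub>v x \<in> ?E" using pact_fixset_invariant_negative_eigenvector[OF T S x inv x] .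
  have "1 \<cdot>\<^sub>v (T *\<^sub>v w) + (- of_real t) \<cdot>\<^sub>v (T *\<^sub>v x) \<in> ?E"
    using E Tw Tx unfolding vec_subspace_def by blast
  moreover have "1 \<cdot>\<^sub>v (T *\<^sub>v w) + (- of_real t) \<cdot>\<^sub>v (T *\<^sub>v x) = T *\<^sub>v v"
    unfolding w_def using Tc vc xc by (intro eq_vecI) (auto simp: mult_add_distrib_mat_vec)
  ultimately show ?thesis by simp
qed

lemma Unk1_eigen_defect_horth:
  assumes S: "S \<in> Unk1 n" and l_unit: "l * cnj l = 1" and w: "w \<in> carrier_vec (n+1)"
  shows "S *\<^sub>v w - l \<cdot>\<^sub>v w \<in> horth n (eigenspace (n+1) S l)"
proof -
  have Swc: "S *\<^sub>v w \<in> carrier_vec (n+1)" using Unk1_carrier[OF S] w by simp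
  have "hform n (S *\<^sub>v w - l \<cdot>\<^sub>v w) e = 0" if e: "e \<in> eigenspace (n+1) S l" for e
  proof -
    have ec: "e \<in> carrier_vec (n+1)" and Se: "S *\<^sub>v e = l \<cdot>\<^sub>v e" using e unfolding eigenspace_def by auto
    have "hform n w e = hform n (S *\<^sub>v w) (S *\<^sub>v e)" using Unk1_hform[OF S w ec] by simp
    also have "\<dots> = cnj l * hform n (S *\<^sub>v w) e" unfolding Se using ec by (simp add: hform_smult_right)
    finally have "l * hform n w e = (l * cnj l) * hform n (S *\<^sub>v w) e" by (simp add: algebra_simps)
    then show ?thesis using l_unit w Swc by (simp add: hform_diff_left hform_smult_left)
  qed
  then show ?thesis unfolding horth_def using Swc w by simp
qed

text \<open>The defect \<open>y = S z - l z\<close> lies in the definite space \<open>E\<^sup>\<bottom>\<close> and, since \<open>z \<bottom> E\<^sup>\<bottom>\<close> and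
  \<open>\<bar>l\<bar> = 1\<close>, expands to \<open>\<langle>y,y\<rangle> = (1 - l cnj l) \<langle>z,z\<rangle> = 0\<close>.\<close>
lemma orth_horth_eigenspace:
  assumes S: "S \<in> Unk1 n" and l_unit: "l * cnj l = 1"
    and definite: "\<forall>v\<in>horth n (eigenspace (n+1) S l). hform n v v = 0 \<longrightarrow> v = 0\<^sub>v (n+1)"
    and z: "z \<in> carrier_vec (n+1)" and z_orth: "\<forall>v\<in>horth n (eigenspace (n+1) S l). hform n z v = 0"
  shows "S *\<^sub>v z = l \<cdot>\<^sub>v z"
proof -
  define y where "y = S *\<^sub>v z - l \<cdot>\<^sub>v z"
  have yV: "y \<in> horth n (eigenspace (n+1) S l)" unfolding y_def using Unk1_eigen_defect_horth[OF S l_unit z] .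
  have Szc: "S *\<^sub>v z \<in> carrier_vec (n+1)" using Unk1_carrier[OF S] z by simp
  have lzc: "l \<cdot>\<^sub>v z \<in> carrier_vec (n+1)" using z by simp
  have "hform n y z = 0" using z_orth yV hform_swap[of n y z] by simp
  then have Szz: "hform n (S *\<^sub>v z) z = l * hform n z z"
    unfolding y_def using hform_diff_left[OF Szc lzc] hform_smult_left[OF z] by simp
  have zSz: "hform n z (S *\<^sub>v z) = cnj l * hform n z z"
    using hform_swap[of n z "S *\<^sub>v z"] hform_swap[of n z z] Szz by simp
  have "hform n y y = hform n (S *\<^sub>v z) (S *\<^sub>v z) - hform n (S *\<^sub>v z) (l \<cdot>\<^sub>v z)
       - hform n (l \<cdot>\<^sub>v z) (S *\<^sub>v z) + hform n (l \<cdot>\<^sub>v z) (l \<cdot>\<^sub>v z)"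
    unfolding y_def using hform_diff_left[OF Szc lzc] hform_diff_right[OF Szc lzc] by simp
  also have "\<dots> = (1 - l * cnj l) * hform n z z"
    using Unk1_hform[OF S z z] z Szz zSz by (simp add: hform_smult_left hform_smult_right algebra_simps)
  finally have "y = 0\<^sub>v (n+1)" using definite yV l_unit by simp
  then show ?thesis unfolding y_def using diff_eq_0_vec_iff[OF Szc lzc] by simp
qed

lemma commute_of_fixes_horth_eigenspace:
  assumes T: "T \<in> Unk1 n" and S: "S \<in> Unk1 n" and l_unit: "l * cnj l = 1"
    and definite: "\<forall>v\<in>horth n (eigenspace (n+1) S l). hform n v v = 0 \<longrightarrow> v = 0\<^sub>v (n+1)"
    and T_fix: "\<forall>v\<in>horth n (eigenspace (n+1) S l). T *\<^sub>v v = v"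
  shows "S * T = T * S"
proof -
  have Tc: "T \<in> carrier_mat (n+1) (n+1)" and Sc: "S \<in> carrier_mat (n+1) (n+1)"
    using Unk1_carrier T S by auto
  have "(S * T) *\<^sub>v w = (T * S) *\<^sub>v w" if w: "w \<in> carrier_vec (n+1)" for w
  proof -
    have Twc: "T *\<^sub>v w \<in> carrier_vec (n+1)" and Swc: "S *\<^sub>v w \<in> carrier_vec (n+1)" using Tc Sc w by auto
    have "hform n (T *\<^sub>v w - w) v = 0" if v: "v \<in> horth n (eigenspace (n+1) S l)" for v
    proof -
      have vc: "v \<in> carrier_vec (n+1)" using v unfolding horth_def by auto
      have "hform n (T *\<^sub>v w) v = hform n w v" using Unk1_hform[OF T w vc] T_fix v by simp
      then show ?thesis using hform_diff_left[OF Twc w] by simp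
    qed
    then have "S *\<^sub>v (T *\<^sub>v w - w) = l \<cdot>\<^sub>v (T *\<^sub>v w - w)"
      using orth_horth_eigenspace[OF S l_unit definite] Twc w by simp
    then have eig: "S *\<^sub>v (T *\<^sub>v w) - S *\<^sub>v w = l \<cdot>\<^sub>v (T *\<^sub>v w - w)"
      using Sc Twc w by (simp add: mult_minus_distrib_mat_vec)
    have "T *\<^sub>v (S *\<^sub>v w - l \<cdot>\<^sub>v w) = S *\<^sub>v w - l \<cdot>\<^sub>v w"
      using T_fix Unk1_eigen_defect_horth[OF S l_unit w] by blast
    then have defect_fixed: "T *\<^sub>v (S *\<^sub>v w) - l \<cdot>\<^sub>v (T *\<^sub>v w) = S *\<^sub>v w - l \<cdot>\<^sub>v w"
      using Tc Swc w by (simp add: mult_minus_distrib_mat_vec mult_mat_vec)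
    show ?thesis
    proof (rule eq_vecI)
      fix i assume "i < dim_vec ((T * S) *\<^sub>v w)"
      then have i: "i < n + 1" using Tc by simp
      from arg_cong[OF eig, of "\<lambda>u. u $ i"] arg_cong[OF defect_fixed, of "\<lambda>u. u $ i"]
      show "((S * T) *\<^sub>v w) $ i = ((T * S) *\<^sub>v w) $ i"
        using i Tc Sc w by (simp add: algebra_simps) (metis add_left_imp_eq)
    qed (use Tc Sc in simp)
  qed
  then show ?thesis using Tc Sc by (intro eq_mat_mult_vecI[of _ "n+1"]) auto
qed

lemma commute_of_pact_fixset_invariant:
  assumes T: "T \<in> Unk1 n" and T_unip: "unipotent n T" and S: "S \<in> Unk1 n" and S_ell: "elliptic n S"
    and inv: "pact T ` fixset n S \<subseteq> fixset n S"
  shows "S * T = T * S"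
proof -
  have Tc: "T \<in> carrier_mat (n+1) (n+1)" and Sc: "S \<in> carrier_mat (n+1) (n+1)"
    using Unk1_carrier T S by auto
  obtain x where xc: "x \<in> carrier_vec (n+1)" and x_neg: "Re (hform n x x) < 0"
    and "pact S (proj_pt x) = proj_pt x"
    using S_ell unfolding elliptic_def chyp_def by auto
  then obtain l where xE: "x \<in> eigenspace (n+1) S l"
    using pact_proj_pt_eq_iff[OF Sc xc] unfolding eigenspace_def by auto
  let ?E = "eigenspace (n+1) S l"
  let ?V = "horth n ?E"
  have l_unit: "l * cnj l = 1"
    using Unk1_eigenvalue_unimodular[OF S xc _ x_neg] xE unfolding eigenspace_def by auto
  obtain k where nil: "(T - 1\<^sub>m (n+1)) ^\<^sub>m k = 0\<^sub>m (n+1) (n+1)"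
    using T_unip unfolding unipotent_def by auto
  have TE: "\<forall>v\<in>?E. T *\<^sub>v v \<in> ?E"
    using pact_fixset_invariant_eigenspace[OF T S xE x_neg inv] by blast
  have onto: "\<forall>e\<in>?E. \<exists>e'\<in>?E. T *\<^sub>v e' = e"
    using unipotent_maps_invariant_subspace_onto[OF Tc nil vec_subspace_eigenspace[OF Sc] TE] by blast
  have definite: "\<forall>v\<in>?V. hform n v v = 0 \<longrightarrow> v = 0\<^sub>v (n+1)"
    using orth_negative_nonpos_imp_zero[OF xc _ x_neg] xE unfolding horth_def by auto
  have "\<forall>v\<in>?V. T *\<^sub>v v = v"
    using Unk1_unipotent_fixes_definite_subspace[OF T nil vec_subspace_horth _ definite]
      Unk1_horth_invariant[OF T _ onto] unfolding eigenspace_def by blast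
  then show ?thesis using commute_of_fixes_horth_eigenspace[OF T S l_unit definite] by blast
qed

theorem lemma3p5:
  fixes n :: nat and T S :: "complex mat"
  assumes "T \<in> Unk1 n" and "unipotent n T" and "parabolic n T"
    and "S \<in> Unk1 n" and "elliptic n S"
  shows "S * T = T * S \<longleftrightarrow>
           (pact T ` fixset n S = fixset n S \<and> pact S ` fixset n T = fixset n T)"
proof
  assume "S * T = T * S"
  then show "pact T ` fixset n S = fixset n S \<and> pact S ` fixset n T = fixset n T"
    using pact_fixset_eq_of_commute[OF assms(1) Unk1_carrier[OF assms(4)]]
      pact_fixset_eq_of_commute[OF assms(4) Unk1_carrier[OF assms(1)]] by simp
next
  assume "pact T ` fixset n S = fixset n S \<and> pact S ` fixset n T = fixset n T"
  then show "S * T = T * S" using commute_of_pact_fixset_invariant[OF assms(1,2,4,5)] by simp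
qed

end
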